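(* Let $L\ge2$, let $\boldsymbol\gamma\in\mathbb R^L$, and let $\Omega$ be a symmetric positive definite $L\times L$ matrix such that $\lambda^{EGMM}_k>0$ for all $k$, where $\lambda^{EGMM}_k=\gamma_k[\Omega^{-1}\boldsymbol\gamma]_k/(\boldsymbol\gamma'\Omega^{-1}\boldsymbol\gamma)$. Then for each $\ell$, viewing $\lambda^{EGMM}_\ell$ as a function of the diagonal entry $[\Omega]_{\ell\ell}$ with all other entries of $\Omega$ held fixed, $$\frac{\partial\lambda^{EGMM}_\ell}{\partial[\Omega]_{\ell\ell}}<0.$$
   Context: In the paper, $\boldsymbol\gamma=(\mathrm{Cov}(D_i,Z_{1i}),\dots,\mathrm{Cov}(D_i,Z_{Li}))'$ are first-stage covariances of a binary treatment with $L$ binary instruments and $\Omega$ is the second moment matrix of the IV moment vector; $\lambda^{EGMM}$ are the implied efficient-GMM weights on the instrument-specific Wald estimands. The result is motivated by the premise that increasing within-complier treatment-effect variance for instrument $\ell$ increases $[\Omega]_{\ell\ell}$ while leaving other entries unchanged. *)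

theory Defs
  imports "HOL-Analysis.Analysis"
begin

definition sym_posdef :: "real ^'n ^'n \<Rightarrow> bool" where
  "sym_posdef A \<longleftrightarrow> transpose A = A \<and> (\<forall>x. x \<noteq> 0 \<longrightarrow> x \<bullet> (A *v x) > 0)"

definition lambda_egmm :: "real ^'n ^'n \<Rightarrow> real ^'n \<Rightarrow> 'n \<Rightarrow> real" where
  "lambda_egmm Omega gamma k =
     gamma $ k * (matrix_inv Omega *v gamma) $ k / (gamma \<bullet> (matrix_inv Omega *v gamma))"

definition diag_upd :: "real ^'n ^'n \<Rightarrow> 'n \<Rightarrow> real \<Rightarrow> real ^'n ^'n" where
  "diag_upd Omega l t = (\<chi> i j. if i = l \<and> j = l then t else Omega $ i $ j)"

end

theory Submission
  imports Defs
begin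

(* With A = Omega^-1, b = A gamma, q = gamma' A gamma and a = A_ll, replacing Omega_ll by
   Omega_ll + s is the rank-one update Omega + s e_l e_l', so by Sherman-Morrison
   lambda_l = gamma_l b_l / (q + s (q a - b_l^2)) near s = 0, with derivative
   -gamma_l b_l (q a - b_l^2) / q^2 at s = 0.  Positivity of lambda_l forces gamma_l b_l > 0
   and q > 0, and q a - b_l^2 > 0 is the strict Cauchy-Schwarz inequality for the inner
   product given by A: it is strict because L >= 2 and every gamma_k is nonzero, so gamma
   is not parallel to e_l. *)

lemma matrix_inv_inverse:
  fixes M :: "'a::semiring_1 ^'n ^'m"
  assumes "invertible M"
  shows matrix_inv_right: "M ** matrix_inv M = mat 1"
    and matrix_inv_left: "matrix_inv M ** M = mat 1"
  using someI_ex[OF assms[unfolded invertible_def]] by (simp_all add: matrix_inv_def)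

lemma matrix_inv_mult_vector_cancel:
  fixes M :: "'a::comm_semiring_1 ^'n ^'n"
  assumes "invertible M"
  shows "M *v (matrix_inv M *v x) = x" and "matrix_inv M *v (M *v x) = x"
  by (simp_all add: assms matrix_vector_mul_assoc matrix_inv_right matrix_inv_left)

lemma transpose_matrix_inv_symmetric:
  fixes M :: "'a::comm_semiring_1 ^'n ^'n"
  assumes "invertible M" and "transpose M = M"
  shows "transpose (matrix_inv M) = matrix_inv M"
proof -
  have "transpose (matrix_inv M) ** M = mat 1"
    by (metis assms matrix_inv_right matrix_transpose_mul transpose_mat)
  then have "transpose (matrix_inv M) = transpose (matrix_inv M) ** (M ** matrix_inv M)"
    by (simp add: assms matrix_inv_right)
  also have "\<dots> = matrix_inv M"
    by (simp add: matrix_mul_assoc \<open>transpose (matrix_inv M) ** M = mat 1\<close>)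
  finally show ?thesis .
qed

lemma symmetric_matrix_inner_commute:
  fixes M :: "real ^'n ^'n"
  assumes "transpose M = M"
  shows "x \<bullet> (M *v y) = y \<bullet> (M *v x)"
  by (metis assms dot_lmul_matrix inner_commute transpose_matrix_vector)

lemma sym_posdef_imp_symmetric: "sym_posdef M \<Longrightarrow> transpose M = M"
  and sym_posdef_pos: "sym_posdef M \<Longrightarrow> x \<noteq> 0 \<Longrightarrow> x \<bullet> (M *v x) > 0"
  unfolding sym_posdef_def by auto

lemma sym_posdef_nonneg: "sym_posdef M \<Longrightarrow> x \<bullet> (M *v x) \<ge> 0"
  by (cases "x = 0") (auto intro: less_imp_le sym_posdef_pos)

lemma sym_posdef_invertible:
  fixes M :: "real ^'n ^'n"
  assumes "sym_posdef M"
  shows "invertible M"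
  unfolding invertible_left_inverse matrix_left_invertible_ker
  using sym_posdef_pos[OF assms] by fastforce

lemma sym_posdef_matrix_inv:
  fixes M :: "real ^'n ^'n"
  assumes "sym_posdef M"
  shows "sym_posdef (matrix_inv M)"
  unfolding sym_posdef_def
proof safe
  have M: "invertible M" "transpose M = M"
    using assms by (simp_all add: sym_posdef_invertible sym_posdef_imp_symmetric)
  then show "transpose (matrix_inv M) = matrix_inv M"
    by (rule transpose_matrix_inv_symmetric)
  fix x :: "real ^'n"
  assume "x \<noteq> 0"
  then have "matrix_inv M *v x \<noteq> 0"
    by (metis M(1) matrix_inv_mult_vector_cancel(1) matrix_vector_mult_0_right)
  then have "0 < (matrix_inv M *v x) \<bullet> (M *v (matrix_inv M *v x))"
    by (rule sym_posdef_pos[OF assms])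
  then show "0 < x \<bullet> (matrix_inv M *v x)"
    by (simp add: matrix_inv_mult_vector_cancel(1)[OF M(1)] inner_commute)
qed

lemma sym_posdef_Cauchy_Schwarz_strict:
  fixes M :: "real ^'n ^'n"
  assumes "sym_posdef M" and "y \<noteq> 0" and "\<And>c. x \<noteq> c *\<^sub>R y"
  shows "(x \<bullet> (M *v y))\<^sup>2 < (x \<bullet> (M *v x)) * (y \<bullet> (M *v y))"
proof -
  define v where "v = (y \<bullet> (M *v y)) *\<^sub>R x - (x \<bullet> (M *v y)) *\<^sub>R y"
  have yy: "y \<bullet> (M *v y) > 0"
    using assms(1,2) by (rule sym_posdef_pos)
  have "v \<noteq> 0"
  proof
    assume "v = 0"
    then have xy: "(y \<bullet> (M *v y)) *\<^sub>R x = (x \<bullet> (M *v y)) *\<^sub>R y"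
      by (simp add: v_def)
    have "x = inverse (y \<bullet> (M *v y)) *\<^sub>R ((x \<bullet> (M *v y)) *\<^sub>R y)"
      using yy by (simp add: xy[symmetric])
    then have "x = ((x \<bullet> (M *v y)) / (y \<bullet> (M *v y))) *\<^sub>R y"
      by (simp add: divide_inverse mult.commute)
    with assms(3) show False by blast
  qed
  then have "0 < v \<bullet> (M *v v)"
    by (rule sym_posdef_pos[OF assms(1)])
  also have "v \<bullet> (M *v v) =
      (y \<bullet> (M *v y)) * ((x \<bullet> (M *v x)) * (y \<bullet> (M *v y)) - (x \<bullet> (M *v y))\<^sup>2)"
    using symmetric_matrix_inner_commute[OF sym_posdef_imp_symmetric[OF assms(1)], of y x]
    by (simp add: v_def matrix_vector_mult_diff_distrib matrix_vector_mult_scaleR inner_diff_left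
        inner_diff_right power2_eq_square algebra_simps)
  finally show ?thesis
    using yy by (simp add: zero_less_mult_iff)
qed

lemma diag_upd_mult_vector:
  fixes M :: "real ^'n ^'n"
  shows "diag_upd M l t *v x = M *v x + ((t - M $ l $ l) * x $ l) *\<^sub>R axis l 1"
proof -
  have "(diag_upd M l t) $ i $ j * x $ j = M $ i $ j * x $ j +
      (if j = l then (if i = l then (t - M $ l $ l) * x $ l else 0) else 0)" for i j
    by (auto simp: diag_upd_def algebra_simps)
  then show ?thesis
    by (simp add: vec_eq_iff matrix_vector_mult_def sum.distrib axis_def)
qed

lemma diag_upd_Sherman_Morrison:
  fixes M :: "real ^'n ^'n" and l :: 'n and t :: real
  defines "A \<equiv> matrix_inv M" and "s \<equiv> t - M $ l $ l"
  assumes "invertible M" and "1 + s * A $ l $ l \<noteq> 0"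
  shows invertible_diag_upd: "invertible (diag_upd M l t)"
    and matrix_inv_diag_upd: "matrix_inv (diag_upd M l t) *v y =
      A *v y - (s * (A *v y) $ l / (1 + s * A $ l $ l)) *\<^sub>R (A *v axis l 1)"
proof -
  define w where "w y = A *v y - (s * (A *v y) $ l / (1 + s * A $ l $ l)) *\<^sub>R (A *v axis l 1)"
    for y
  have MA: "M *v (A *v x) = x" for x
    by (simp add: A_def assms(3) matrix_inv_mult_vector_cancel)
  have w_l: "w y $ l = (A *v y) $ l / (1 + s * A $ l $ l)" for y
    using assms(4) by (simp add: w_def matrix_vector_mult_basis column_def field_simps)
  have "diag_upd M l t *v w y = y" for y
  proof -
    have "M *v w y = y - (s * (A *v y) $ l / (1 + s * A $ l $ l)) *\<^sub>R axis l 1"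
      by (simp add: w_def matrix_vector_mult_diff_distrib matrix_vector_mult_scaleR MA)
    then show ?thesis
      by (simp add: diag_upd_mult_vector s_def[symmetric] w_l)
  qed
  then have "surj ((*v) (diag_upd M l t))"
    by (metis surjI)
  then show inv: "invertible (diag_upd M l t)"
    by (simp add: invertible_right_inverse matrix_right_invertible_surjective)
  show "matrix_inv (diag_upd M l t) *v y = w y"
    by (metis inv \<open>diag_upd M l t *v w y = y\<close> matrix_inv_mult_vector_cancel(2))
qed

lemma lambda_egmm_diag_upd_eq:
  fixes M :: "real ^'n ^'n" and gamma :: "real ^'n" and l :: 'n and t :: real
  defines "s \<equiv> t - M $ l $ l" and "a \<equiv> matrix_inv M $ l $ l"
    and "q \<equiv> gamma \<bullet> (matrix_inv M *v gamma)" and "b \<equiv> (matrix_inv M *v gamma) $ l"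
  assumes "invertible M" and "transpose M = M" and "1 + s * a \<noteq> 0"
  shows "lambda_egmm (diag_upd M l t) gamma l = gamma $ l * b / (q + s * (q * a - b\<^sup>2))"
proof -
  define c where "c = s * b / (1 + s * a)"
  have inv_gamma:
    "matrix_inv (diag_upd M l t) *v gamma = matrix_inv M *v gamma - c *\<^sub>R (matrix_inv M *v axis l 1)"
    using matrix_inv_diag_upd[OF assms(5,7)[unfolded a_def s_def]]
    by (simp add: a_def s_def c_def b_def)
  have "gamma \<bullet> (matrix_inv M *v axis l 1) = b"
    using symmetric_matrix_inner_commute[OF transpose_matrix_inv_symmetric[OF assms(5,6)],
        of gamma "axis l 1"]
    by (simp add: b_def inner_axis')
  then have "gamma \<bullet> (matrix_inv (diag_upd M l t) *v gamma) = (q + s * (q * a - b\<^sup>2)) / (1 + s * a)"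
    using assms(7) by (simp add: inv_gamma inner_diff_right q_def c_def field_simps power2_eq_square)
  moreover have "(matrix_inv (diag_upd M l t) *v gamma) $ l = b / (1 + s * a)"
    using assms(7)
    by (simp add: inv_gamma c_def b_def a_def matrix_vector_mult_basis column_def field_simps)
  ultimately show ?thesis
    using assms(7) by (simp add: lambda_egmm_def)
qed

lemma has_real_derivative_divide_affine:
  fixes K q c t0 :: real
  assumes "q \<noteq> 0"
  shows "((\<lambda>t. K / (q + (t - t0) * c)) has_real_derivative - K * c / q\<^sup>2) (at t0)"
  by (rule derivative_eq_intros refl | use assms in \<open>simp add: power2_eq_square\<close>)+

lemma sym_posdef_Cauchy_Schwarz_axis:
  fixes M :: "real ^'n ^'n" and x :: "real ^'n"
  assumes "sym_posdef M" and "k \<noteq> l" and "x $ k \<noteq> 0"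
  shows "((M *v x) $ l)\<^sup>2 < M $ l $ l * (x \<bullet> (M *v x))"
proof -
  have "axis l 1 \<noteq> c *\<^sub>R x" for c :: real
  proof
    assume axis_eq: "axis l 1 = c *\<^sub>R x"
    have "c * x $ k = 0" and "c * x $ l = 1"
      using arg_cong[OF axis_eq, of "\<lambda>v. v $ k"] arg_cong[OF axis_eq, of "\<lambda>v. v $ l"] assms(2)
      by (simp_all add: axis_def)
    then show False
      using assms(3) by simp
  qed
  moreover have "x \<noteq> 0"
    using assms(3) by auto
  ultimately show ?thesis
    using sym_posdef_Cauchy_Schwarz_strict[OF assms(1), of x "axis l 1"]
    by (simp add: inner_axis' matrix_vector_mult_basis column_def)
qed

lemma has_real_derivative_lambda_egmm_diag_upd:
  fixes M :: "real ^'n ^'n" and gamma :: "real ^'n" and l :: 'n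
  defines "a \<equiv> matrix_inv M $ l $ l"
    and "q \<equiv> gamma \<bullet> (matrix_inv M *v gamma)" and "b \<equiv> (matrix_inv M *v gamma) $ l"
  assumes "invertible M" and "transpose M = M" and "q \<noteq> 0"
  shows "((\<lambda>t. lambda_egmm (diag_upd M l t) gamma l) has_real_derivative
    - (gamma $ l * b) * (q * a - b\<^sup>2) / q\<^sup>2) (at (M $ l $ l))"
proof (rule has_field_derivative_transform_within_open)
  show "((\<lambda>t. gamma $ l * b / (q + (t - M $ l $ l) * (q * a - b\<^sup>2))) has_real_derivative
      - (gamma $ l * b) * (q * a - b\<^sup>2) / q\<^sup>2) (at (M $ l $ l))"
    using assms(6) by (intro has_real_derivative_divide_affine) simp
  show "open {t. 1 + (t - M $ l $ l) * a \<noteq> 0}"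
    by (intro open_Collect_neq continuous_intros)
  show "gamma $ l * b / (q + (t - M $ l $ l) * (q * a - b\<^sup>2)) =
      lambda_egmm (diag_upd M l t) gamma l"
    if "t \<in> {t. 1 + (t - M $ l $ l) * a \<noteq> 0}" for t
    using lambda_egmm_diag_upd_eq[OF assms(4,5)] that by (simp add: a_def b_def q_def mult.commute)
qed simp

theorem proposition18:
  fixes Omega :: "real ^'n ^'n" and gamma :: "real ^'n" and l :: 'n
  assumes "CARD('n) \<ge> 2"
    and "sym_posdef Omega"
    and "\<forall>k. lambda_egmm Omega gamma k > 0"
  shows "\<exists>D. ((\<lambda>t. lambda_egmm (diag_upd Omega l t) gamma l)
              has_real_derivative D) (at (Omega $ l $ l)) \<and> D < 0"
proof -
  define a where "a = matrix_inv Omega $ l $ l"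
  define q where "q = gamma \<bullet> (matrix_inv Omega *v gamma)"
  define b where "b = (matrix_inv Omega *v gamma) $ l"
  have inv_posdef: "sym_posdef (matrix_inv Omega)"
    using assms(2) by (rule sym_posdef_matrix_inv)
  have "\<not> UNIV \<subseteq> {l}"
    using assms(1) card_mono[of "{l}" UNIV] by auto
  then obtain k where "k \<noteq> l"
    by blast
  moreover have "gamma $ k \<noteq> 0"
    using assms(3)[rule_format, of k] by (auto simp: lambda_egmm_def)
  ultimately have Cauchy_Schwarz: "b\<^sup>2 < a * q"
    unfolding a_def b_def q_def by (rule sym_posdef_Cauchy_Schwarz_axis[OF inv_posdef])
  have "gamma $ l * b / q > 0"
    using assms(3) by (simp add: lambda_egmm_def b_def q_def)
  moreover have "q \<ge> 0"
    unfolding q_def using inv_posdef by (rule sym_posdef_nonneg)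
  ultimately have "q > 0" and "gamma $ l * b > 0"
    by (auto simp: zero_less_divide_iff)
  then have "- (gamma $ l * b) * (q * a - b\<^sup>2) / q\<^sup>2 < 0"
    using Cauchy_Schwarz by (simp add: mult.commute)
  moreover have "((\<lambda>t. lambda_egmm (diag_upd Omega l t) gamma l) has_real_derivative
      - (gamma $ l * b) * (q * a - b\<^sup>2) / q\<^sup>2) (at (Omega $ l $ l))"
    using \<open>q > 0\<close> sym_posdef_invertible[OF assms(2)] sym_posdef_imp_symmetric[OF assms(2)]
    unfolding a_def b_def q_def by (intro has_real_derivative_lambda_egmm_diag_upd) auto
  ultimately show ?thesis
    by blast
qed

end
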